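(* Suppose (a) $\mathcal{A}$ is surjective and the primal--dual SDP pair has a nonempty set of KKT points, and (b) three-step ADMM converges to a KKT point $(X_{\star},y_{\star},S_{\star})$ with $\operatorname{rank}(X_{\star})+\operatorname{rank}(S_{\star})=n$. Then there exist $\bar k_Z\in\mathbb{N}$ and $\alpha_Z>0$ such that for any integer $k\ge\bar k_Z$, \[ \mathrm{dist}(Z^{(k)},\mathcal{Z}_\star)\le\alpha_Z\big(\|Z^{(k+1)}-Z^{(k)}\|_F+\|\Pi_{\mathcal{T}_{S_{\star}}}(X^{(k)})\|_F+\sigma\|\Pi_{\mathcal{T}_{X_{\star}}}(S^{(k)})\|_F\big). \]
   Context: Consider the standard-form SDP pair: primal $\min \langle C,X\rangle$ s.t. $\mathcal{A}X=b$, $X\in\mathbb{S}^n_+$; dual $\max b^{\mathsf T}y$ s.t. $\mathcal{A}^*y+S=C$, $S\in\mathbb{S}^n_+$. ADMM with penalty $\sigma>0$ is written as the one-step fixed-point iteration $Z^{(k+1)}=\mathcal{A}^*(\mathcal{A}\mathcal{A}^* )^{-1}\mathcal{A}(-2\Pi_{\mathbb{S}^n_+}(Z^{(k)})+Z^{(k)})+\Pi_{\mathbb{S}^n_+}(Z^{(k)})+\mathcal{A}^*(\mathcal{A}\mathcal{A}^* )^{-1}b+\sigma\mathcal{A}^*(\mathcal{A}\mathcal{A}^* )^{-1}\mathcal{A}C-\sigma C$, with $X^{(k)}=\Pi_{\mathbb{S}^n_+}(Z^{(k)})$ and $\sigma S^{(k)}=\Pi_{\mathbb{S}^n_+}(-Z^{(k)})$.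 $\mathcal{Z}_\star$ denotes the set of fixed points of this iteration. Without loss of generality $X_{\star}=\mathrm{diag}(\lambda_1,\dots,\lambda_r,0,\dots,0)$ and $\sigma S_{\star}=\mathrm{diag}(0,\dots,0,-\lambda_{r+1},\dots,-\lambda_n)$ with $\lambda_1\ge\dots\ge\lambda_r>0>\lambda_{r+1}\ge\dots\ge\lambda_n$. The subspaces are $\mathcal{T}_{S_{\star}}=\{\begin{bmatrix}0&B^{\mathsf T}\\ B&D\end{bmatrix}: B\in\mathbb{R}^{(n-r)\times r}, D\in\mathbb{S}^{n-r}\}$ and $\mathcal{T}_{X_{\star}}=\{\begin{bmatrix}A&B^{\mathsf T}\\ B&0\end{bmatrix}: A\in\mathbb{S}^{r}, B\in\mathbb{R}^{(n-r)\times r}\}$; $\Pi$ denotes orthogonal projection and $\mathrm{dist}$ the Frobenius distance. *)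

theory Defs
  imports "HOL-Analysis.Analysis"
begin

text \<open>Matrices are elements of real^'n^'n. The built-in norm/inner product/dist on
this type are exactly the Frobenius norm, the trace inner product and the Frobenius distance.\<close>

definition symmetric_mat :: "real^'n^'n \<Rightarrow> bool" where
  "symmetric_mat M \<longleftrightarrow> transpose M = M"

definition psd :: "real^'n^'n \<Rightarrow> bool" where
  "psd M \<longleftrightarrow> symmetric_mat M \<and> (\<forall>x. 0 \<le> x \<bullet> (M *v x))"

definition psd_cone :: "(real^'n^'n) set" where
  "psd_cone = {M. psd M}"

definition proj_psd :: "real^'n^'n \<Rightarrow> real^'n^'n" where
  "proj_psd Z = closest_point psd_cone Z"

definition Aop :: "('m::finite \<Rightarrow> real^'n^'n) \<Rightarrow> real^'n^'n \<Rightarrow> real^'m" where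
  "Aop Ai X = (\<chi> i. Ai i \<bullet> X)"

definition Astar :: "('m::finite \<Rightarrow> real^'n^'n) \<Rightarrow> real^'m \<Rightarrow> real^'n^'n" where
  "Astar Ai y = (\<Sum>i\<in>UNIV. (y $ i) *\<^sub>R Ai i)"

definition AAinv :: "('m::finite \<Rightarrow> real^'n^'n) \<Rightarrow> real^'m \<Rightarrow> real^'m" where
  "AAinv Ai y = matrix_inv (matrix (\<lambda>v. Aop Ai (Astar Ai v))) *v y"

definition KKT :: "('m::finite \<Rightarrow> real^'n^'n) \<Rightarrow> real^'m \<Rightarrow> real^'n^'n
    \<Rightarrow> real^'n^'n \<Rightarrow> real^'m \<Rightarrow> real^'n^'n \<Rightarrow> bool" where
  "KKT Ai b C X y S \<longleftrightarrow> psd X \<and> psd S \<and> Aop Ai X = b \<and> Astar Ai y + S = C \<and> X \<bullet> S = 0"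

definition admm_map :: "('m::finite \<Rightarrow> real^'n^'n) \<Rightarrow> real^'m \<Rightarrow> real^'n^'n \<Rightarrow> real
    \<Rightarrow> real^'n^'n \<Rightarrow> real^'n^'n" where
  "admm_map Ai b C \<sigma> Z =
     Astar Ai (AAinv Ai (Aop Ai (Z - 2 *\<^sub>R proj_psd Z))) + proj_psd Z
     + Astar Ai (AAinv Ai b) + \<sigma> *\<^sub>R Astar Ai (AAinv Ai (Aop Ai C)) - \<sigma> *\<^sub>R C"

definition admm_fixed :: "('m::finite \<Rightarrow> real^'n^'n) \<Rightarrow> real^'m \<Rightarrow> real^'n^'n \<Rightarrow> real
    \<Rightarrow> (real^'n^'n) set" where
  "admm_fixed Ai b C \<sigma> = {Z. admm_map Ai b C \<sigma> Z = Z}"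

text \<open>Coordinate-free form of the subspaces T_{S*} and T_{X*}. In the eigenbasis where
X* = diag(lambda_1..lambda_r,0..0) (lambda_i>0) and S* is supported on the last n-r
coordinates, "top-left r x r block zero" is equivalent to X* M X* = 0, and
"bottom-right block zero" is equivalent to S* M S* = 0.\<close>
definition T_S :: "real^'n^'n \<Rightarrow> (real^'n^'n) set" where
  "T_S Xs = {M. symmetric_mat M \<and> Xs ** M ** Xs = 0}"

definition T_X :: "real^'n^'n \<Rightarrow> (real^'n^'n) set" where
  "T_X Ss = {M. symmetric_mat M \<and> Ss ** M ** Ss = 0}"

end

theory Submission
  imports Defs
begin

text \<open>
  Every symmetric \<open>Z\<close> splits as \<open>Z = X - \<sigma> S\<close> with \<open>X = \<Pi>(Z)\<close>, \<open>\<sigma> S = \<Pi>(-Z)\<close> (Moreau), and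
  \<open>Z\<close> is a fixed point as soon as \<open>(X, S)\<close> is a KKT pair. Besides linear conditions (\<open>calA X = b\<close>,
  \<open>S \<in> C + range calA*\<close>, symmetry), a KKT pair needs \<open>X, S \<succeq> 0\<close> and \<open>X \<bullet> S = 0\<close>. Close to
  \<open>(Xs, Ss)\<close> these nonlinear conditions follow from the linear ones "\<open>X\<close> has no component in
  \<open>T_S Xs\<close>" and "\<open>S\<close> has no component in \<open>T_X Ss\<close>": off \<open>T_S P\<close> a symmetric perturbation of a
  semidefinite \<open>P\<close> stays semidefinite, and complementarity survives. So near \<open>(Xs, Ss)\<close> the
  solutions of one consistent linear system give fixed points, and Hoffman's bound controls the
  distance to them by the residual of that system, which is bounded by the ADMM step and the two
  projections in the statement.
\<close>

section \<open>Positive semidefinite matrices\<close>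

definition outer :: "real^'m \<Rightarrow> real^'n \<Rightarrow> real^'n^'m" where
  "outer u v = (\<chi> i j. u$i * v$j)"

lemma outer_mv: "outer u v *v x = (v \<bullet> x) *\<^sub>R u"
  by (simp add: outer_def matrix_vector_mult_def vec_eq_iff inner_vec_def sum_distrib_left mult_ac)

lemma inner_outer: "M \<bullet> outer u v = u \<bullet> (M *v v)"
  by (simp add: outer_def matrix_vector_mult_def inner_vec_def sum_distrib_left mult_ac)

lemma outer_inner: "outer u v \<bullet> M = u \<bullet> (M *v v)"
  by (simp add: inner_commute inner_outer)

lemma norm_outer: "norm (outer u v) = norm u * norm v"
proof -
  have "outer u v \<bullet> outer u v = (u \<bullet> u) * (v \<bullet> v)"
    by (simp add: inner_outer outer_mv)
  then show ?thesis
    by (simp add: norm_eq_sqrt_inner real_sqrt_mult)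
qed

lemma transpose_outer: "transpose (outer u v) = outer v u"
  by (simp add: outer_def transpose_def vec_eq_iff mult.commute)

lemma transpose_add: "transpose (A + B) = transpose A + transpose (B::real^'n^'m)"
  by (simp add: transpose_def vec_eq_iff)

lemma mv_axis_nth: "(M *v axis a 1) $ i = M$i$a"
  by (simp add: matrix_vector_mult_def axis_def if_distrib cong: if_cong)

lemma matrix_eq_0_if_mv_axis_eq_0:
  assumes "\<And>i. M *v axis i 1 = 0"
  shows "M = 0"
  using mv_axis_nth[of M] assms by (simp add: vec_eq_iff)

lemma subspace_symmetric_mat: "subspace {M::real^'n^'n. symmetric_mat M}"
  unfolding subspace_def symmetric_mat_def
  by (simp add: transpose_def vec_eq_iff)

lemma symmetric_mat_add: "symmetric_mat A \<Longrightarrow> symmetric_mat B \<Longrightarrow> symmetric_mat (A + B)"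
  using subspace_add[OF subspace_symmetric_mat] by blast

lemma symmetric_mat_diff: "symmetric_mat A \<Longrightarrow> symmetric_mat B \<Longrightarrow> symmetric_mat (A - B)"
  using subspace_diff[OF subspace_symmetric_mat] by blast

lemma symmetric_mat_scaleR: "symmetric_mat A \<Longrightarrow> symmetric_mat (c *\<^sub>R A)"
  using subspace_scale[OF subspace_symmetric_mat] by blast

lemma symmetric_mat_mv_inner: "symmetric_mat M \<Longrightarrow> (M *v x) \<bullet> y = x \<bullet> (M *v y)"
  unfolding symmetric_mat_def
  by (metis dot_lmul_matrix vector_transpose_matrix)

lemma symmetric_mat_outer_add: "symmetric_mat (outer u v + outer v u)"
  unfolding symmetric_mat_def by (simp add: transpose_add transpose_outer)

lemma discriminant_le_if_quadratic_nonneg: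
  fixes a b c :: real
  assumes "0 \<le> a" and nonneg: "\<And>t. 0 \<le> c + 2 * t * b + t\<^sup>2 * a"
  shows "b\<^sup>2 \<le> a * c"
proof (cases "a = 0")
  case True
  have "b = 0"
  proof (rule ccontr)
    assume "b \<noteq> 0"
    have "0 \<le> c + 2 * (- (c + 1) / (2 * b)) * b" using nonneg[of "- (c + 1) / (2 * b)"] True by simp
    also have "\<dots> = -1" using \<open>b \<noteq> 0\<close> by (simp add: field_simps)
    finally show False by simp
  qed
  then show ?thesis using True by simp
next
  case False
  have "0 \<le> c + 2 * (- b / a) * b + (- b / a)\<^sup>2 * a" by (rule nonneg)
  also have "\<dots> = (a * c - b\<^sup>2) / a" using False by (simp add: field_simps power2_eq_square)
  finally have "0 \<le> (a * c - b\<^sup>2) / a" .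
  then show ?thesis using False \<open>0 \<le> a\<close> by (simp add: zero_le_divide_iff)
qed

lemma psd_cauchy_schwarz:
  assumes "psd M"
  shows "(y \<bullet> (M *v x))\<^sup>2 \<le> (y \<bullet> (M *v y)) * (x \<bullet> (M *v x))"
proof (rule discriminant_le_if_quadratic_nonneg)
  show "0 \<le> y \<bullet> (M *v y)" using assms by (simp add: psd_def)
  have sym: "y \<bullet> (M *v x) = x \<bullet> (M *v y)"
    using assms symmetric_mat_mv_inner[of M y x] by (simp add: psd_def inner_commute)
  fix t
  have "0 \<le> (x + t *\<^sub>R y) \<bullet> (M *v (x + t *\<^sub>R y))" using assms by (simp add: psd_def)
  also have "\<dots> = x \<bullet> (M *v x) + 2 * t * (y \<bullet> (M *v x)) + t\<^sup>2 * (y \<bullet> (M *v y))"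
    by (simp add: sym power2_eq_square algebra_simps)
  finally show "0 \<le> x \<bullet> (M *v x) + 2 * t * (y \<bullet> (M *v x)) + t\<^sup>2 * (y \<bullet> (M *v y))" .
qed

lemma psd_mv_eq_0_if_form_eq_0:
  assumes "psd M" "x \<bullet> (M *v x) = 0"
  shows "M *v x = 0"
  using psd_cauchy_schwarz[OF assms(1), where y = "M *v x" and x = x] assms(2) by simp

lemma psd_outer_self: "psd (outer u u)"
  unfolding psd_def symmetric_mat_def by (simp add: transpose_outer outer_mv inner_commute)

text \<open>A Cholesky step; the remainder stays semidefinite by Cauchy-Schwarz for the form of \<open>M\<close>.\<close>
lemma psd_rank_one_deflation:
  fixes M :: "real^'n^'n"
  assumes psdM: "psd M" and pos: "0 < e \<bullet> (M *v e)"
  defines "u \<equiv> (1 / sqrt (e \<bullet> (M *v e))) *\<^sub>R (M *v e)"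
  shows "psd (M - outer u u)" and "(M - outer u u) *v e = 0"
    and "\<And>x. M *v x = 0 \<Longrightarrow> (M - outer u u) *v x = 0"
    and "u \<in> range ((*v) M)" and "range ((*v) (M - outer u u)) \<subseteq> range ((*v) M)"
proof -
  define s where "s = sqrt (e \<bullet> (M *v e))"
  have spos: "0 < s" using pos by (simp add: s_def)
  have ss: "s * s = e \<bullet> (M *v e)" using pos by (simp add: s_def)
  have symM: "symmetric_mat M" using psdM by (simp add: psd_def)
  have u_inner: "u \<bullet> x = (e \<bullet> (M *v x)) / s" for x
    using symmetric_mat_mv_inner[OF symM, of e x] by (simp add: u_def s_def)
  have defl: "(M - outer u u) *v x = M *v (x - ((u \<bullet> x) / s) *\<^sub>R e)" for x
    by (simp add: outer_mv matrix_vector_mult_diff_distrib matrix_vector_mult_diff_rdistrib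
        u_def s_def inner_commute matrix_vector_mult_scaleR)
  have "0 \<le> x \<bullet> ((M - outer u u) *v x)" for x
  proof -
    have "(e \<bullet> (M *v x))\<^sup>2 \<le> (e \<bullet> (M *v e)) * (x \<bullet> (M *v x))"
      by (rule psd_cauchy_schwarz[OF psdM])
    then have "(u \<bullet> x)\<^sup>2 \<le> x \<bullet> (M *v x)"
      using spos by (simp add: u_inner ss[symmetric] power2_eq_square field_simps)
    then show ?thesis
      by (simp add: outer_mv matrix_vector_mult_diff_rdistrib inner_diff_right power2_eq_square inner_commute)
  qed
  moreover have "symmetric_mat (M - outer u u)"
    using symM psd_outer_self[of u] by (intro symmetric_mat_diff) (simp_all add: psd_def)
  ultimately show "psd (M - outer u u)" by (simp add: psd_def)
  show "(M - outer u u) *v e = 0"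
    using pos by (simp add: outer_mv matrix_vector_mult_diff_rdistrib u_inner u_def inner_commute)
  show "(M - outer u u) *v x = 0" if "M *v x = 0" for x
    using that symmetric_mat_mv_inner[OF symM, of x e]
    by (simp add: outer_mv matrix_vector_mult_diff_rdistrib u_inner inner_commute)
  show "u \<in> range ((*v) M)"
    by (simp add: u_def flip: matrix_vector_mult_scaleR)
  show "range ((*v) (M - outer u u)) \<subseteq> range ((*v) M)"
    using defl by auto
qed

lemma sum_matrix_vector_mult: "(\<Sum>k\<in>K. A k) *v x = (\<Sum>k\<in>K. A k *v (x::real^'n))"
  by (induction K rule: infinite_finite_induct) (simp_all add: matrix_vector_mult_add_rdistrib)

lemma psd_sum_outer_if_columns_vanish:
  fixes M :: "real^'n^'n"
  assumes "finite I" "psd M" "\<And>i. i \<notin> I \<Longrightarrow> M *v axis i 1 = 0"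
  shows "\<exists>(N::nat) u. M = (\<Sum>k<N. outer (u k) (u k)) \<and> (\<forall>k<N. u k \<in> range ((*v) M))"
  using assms
proof (induction I arbitrary: M rule: finite_induct)
  case empty
  then have "M = 0" by (simp add: matrix_eq_0_if_mv_axis_eq_0)
  then show ?case by (intro exI[of _ 0]) simp
next
  case (insert a I)
  define e :: "real^'n" where "e = axis a 1"
  show ?case
  proof (cases "e \<bullet> (M *v e) = 0")
    case True
    with insert.prems(1) have "M *v e = 0" by (rule psd_mv_eq_0_if_form_eq_0)
    then have "\<And>i. i \<notin> I \<Longrightarrow> M *v axis i 1 = 0"
      using insert.prems(2) e_def by (metis insertE)
    then show ?thesis using insert.IH insert.prems(1) by blast
  next
    case False
    then have pos: "0 < e \<bullet> (M *v e)" using insert.prems(1) by (simp add: psd_def order_less_le)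
    define u where "u = (1 / sqrt (e \<bullet> (M *v e))) *\<^sub>R (M *v e)"
    note deflation = psd_rank_one_deflation[OF insert.prems(1) pos, folded u_def]
    have "\<And>i. i \<notin> I \<Longrightarrow> (M - outer u u) *v axis i 1 = 0"
      using deflation(2,3) insert.prems(2) e_def by (metis insertE)
    then obtain N :: nat and w where w: "M - outer u u = (\<Sum>k<N. outer (w k) (w k))"
      "\<forall>k<N. w k \<in> range ((*v) (M - outer u u))"
      using insert.IH deflation(1) by blast
    define w' where "w' k = (if k < N then w k else u)" for k
    have "M = (\<Sum>k<Suc N. outer (w' k) (w' k))"
      by (simp add: w'_def flip: w(1))
    moreover have "\<forall>k<Suc N. w' k \<in> range ((*v) M)"
      using w(2) deflation(4,5) by (auto simp: w'_def less_Suc_eq)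
    ultimately show ?thesis by blast
  qed
qed

lemma psd_sum_outer:
  fixes M :: "real^'n^'n"
  assumes "psd M"
  obtains N :: nat and u where "M = (\<Sum>k<N. outer (u k) (u k))" "\<And>k. k < N \<Longrightarrow> u k \<in> range ((*v) M)"
  using psd_sum_outer_if_columns_vanish[of UNIV M] assms by auto

lemma inner_sum_outer: "(\<Sum>k<N. outer (u k) (u k)) \<bullet> B = (\<Sum>k<N. u k \<bullet> (B *v u k))"
  by (simp add: inner_sum_left outer_inner)

lemma psd_inner_nonneg:
  assumes "psd A" "psd B"
  shows "0 \<le> A \<bullet> B"
proof -
  obtain N :: nat and u where "A = (\<Sum>k<N. outer (u k) (u k))"
    using psd_sum_outer[OF assms(1)] by blast
  then show ?thesis using assms(2) by (simp add: inner_sum_outer psd_def sum_nonneg)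
qed

lemma psd_mult_eq_0_if_inner_eq_0:
  fixes A B :: "real^'n^'n"
  assumes "psd A" "psd B" "A \<bullet> B = 0"
  shows "B ** A = 0"
proof -
  obtain N :: nat and u where A: "A = (\<Sum>k<N. outer (u k) (u k))"
    using psd_sum_outer[OF assms(1)] by blast
  have "(\<Sum>k<N. u k \<bullet> (B *v u k)) = 0" using assms(3) by (simp add: A inner_sum_outer)
  then have "\<forall>k<N. u k \<bullet> (B *v u k) = 0"
    using assms(2) sum_nonneg_eq_0_iff[of "{..<N}" "\<lambda>k. u k \<bullet> (B *v u k)"] by (simp add: psd_def)
  then have Bu: "\<forall>k<N. B *v u k = 0" using psd_mv_eq_0_if_form_eq_0[OF assms(2)] by blast
  have "(B ** A) *v x = 0" for x
    using Bu by (simp add: A flip: matrix_vector_mul_assoc)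
      (simp add: sum_matrix_vector_mult outer_mv matrix_vector_mult_scaleR
        linear_sum[OF matrix_vector_mul_linear])
  then show ?thesis by (simp add: matrix_eq)
qed

text \<open>For \<open>P = \<Sum> u\<^sub>k u\<^sub>k\<^sup>T\<close> with each \<open>u\<^sub>k = P v\<^sub>k\<close>, the pairing \<open>P \<bullet> M = \<Sum> v\<^sub>k\<^sup>T P M P v\<^sub>k\<close>.\<close>
lemma psd_inner_eq_0_if_sandwich_eq_0:
  assumes "psd P" "P ** M ** P = 0"
  shows "P \<bullet> M = 0"
proof -
  obtain N :: nat and u where P: "P = (\<Sum>k<N. outer (u k) (u k))"
    and rng: "\<And>k. k < N \<Longrightarrow> u k \<in> range ((*v) P)"
    using psd_sum_outer[OF assms(1)] by blast
  have "u k \<bullet> (M *v u k) = 0" if k: "k < N" for k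
  proof -
    obtain v where v: "u k = P *v v" using rng[OF k] by blast
    have "u k \<bullet> (M *v u k) = v \<bullet> ((P ** M ** P) *v v)"
      using assms(1) symmetric_mat_mv_inner[of P v]
      by (simp add: v psd_def matrix_vector_mul_assoc flip: matrix_mul_assoc)
    then show ?thesis by (simp add: assms(2))
  qed
  then show ?thesis by (simp add: P inner_sum_outer)
qed

lemma psd_add: "psd A \<Longrightarrow> psd B \<Longrightarrow> psd (A + B)"
  unfolding psd_def symmetric_mat_def
  by (auto simp: transpose_add matrix_vector_mult_add_rdistrib inner_add_right intro: add_nonneg_nonneg)

lemma psd_scaleR: "psd A \<Longrightarrow> 0 \<le> c \<Longrightarrow> psd (c *\<^sub>R A)"
  unfolding psd_def symmetric_mat_def
  by (auto simp: transpose_scalar scaleR_matrix_vector_assoc[symmetric])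

lemma psd_zero: "psd 0"
  unfolding psd_def symmetric_mat_def by (simp add: transpose_def vec_eq_iff)

lemma psd_cone_eq_Int_halfspaces:
  "psd_cone = {M. symmetric_mat M} \<inter> (\<Inter>x. {M. 0 \<le> outer x x \<bullet> M})"
  by (auto simp: psd_cone_def psd_def outer_inner)

lemma closed_psd_cone: "closed psd_cone"
  unfolding psd_cone_eq_Int_halfspaces
  by (intro closed_Int closed_subspace[OF subspace_symmetric_mat] closed_INT ballI closed_halfspace_ge)

lemma convex_psd_cone: "convex psd_cone"
  unfolding convex_def psd_cone_def by (auto intro: psd_add psd_scaleR)

lemma psd_proj_psd: "psd (proj_psd Z)"
  using closest_point_in_set[OF closed_psd_cone] psd_zero
  unfolding proj_psd_def psd_cone_def by blast

lemma proj_psd_dot_le: "psd Y \<Longrightarrow> (Z - proj_psd Z) \<bullet> (Y - proj_psd Z) \<le> 0"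
  using closest_point_dot[OF convex_psd_cone closed_psd_cone]
  unfolding proj_psd_def psd_cone_def by blast

lemma proj_psd_orthogonal: "(Z - proj_psd Z) \<bullet> proj_psd Z = 0"
proof -
  have "(Z - proj_psd Z) \<bullet> (0 - proj_psd Z) \<le> 0" using proj_psd_dot_le[OF psd_zero] .
  moreover have "(Z - proj_psd Z) \<bullet> (2 *\<^sub>R proj_psd Z - proj_psd Z) \<le> 0"
    using proj_psd_dot_le[OF psd_scaleR[OF psd_proj_psd, of 2]] by simp
  ultimately show ?thesis by (simp add: algebra_simps)
qed

lemma proj_psd_polar: "psd Y \<Longrightarrow> (Z - proj_psd Z) \<bullet> Y \<le> 0"
  using proj_psd_dot_le[of Y Z] proj_psd_orthogonal[of Z] by (simp add: inner_diff_right)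

lemma proj_psd_diff_complementary:
  assumes "psd X" "psd S" "X \<bullet> S = 0"
  shows "proj_psd (X - S) = X"
proof -
  have "dist (X - S) X \<le> dist (X - S) Y" if "psd Y" for Y
  proof -
    have "(dist (X - S) Y)\<^sup>2 = (norm ((X - Y) - S))\<^sup>2" by (simp add: dist_norm algebra_simps)
    also have "\<dots> = (norm (X - Y))\<^sup>2 - 2 * ((X - Y) \<bullet> S) + (norm S)\<^sup>2"
      by (simp add: power2_norm_eq_inner inner_diff_left inner_diff_right inner_commute)
    also have "\<dots> = (norm (X - Y))\<^sup>2 + 2 * (Y \<bullet> S) + (norm S)\<^sup>2"
      using assms(3) by (simp add: inner_diff_left)
    also have "\<dots> \<ge> (norm S)\<^sup>2" using psd_inner_nonneg[OF that assms(2)] by simp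
    finally have "(dist (X - S) X)\<^sup>2 \<le> (dist (X - S) Y)\<^sup>2" by (simp add: dist_norm)
    then show ?thesis by (rule power2_le_imp_le) simp
  qed
  then show ?thesis
    using closest_point_unique[OF convex_psd_cone closed_psd_cone] assms(1)
    unfolding proj_psd_def psd_cone_def by fastforce
qed

lemma proj_psd_moreau:
  assumes "symmetric_mat Z"
  shows "Z = proj_psd Z - proj_psd (- Z)"
proof -
  define W where "W = proj_psd Z - Z"
  have "symmetric_mat W"
    using assms psd_proj_psd[of Z] by (simp add: W_def psd_def symmetric_mat_diff)
  moreover have "0 \<le> x \<bullet> (W *v x)" for x
  proof -
    have "x \<bullet> (W *v x) = - ((Z - proj_psd Z) \<bullet> outer x x)"
      by (simp add: W_def inner_outer[symmetric] inner_diff_left)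
    then show ?thesis using proj_psd_polar[OF psd_outer_self[of x], of Z] by simp
  qed
  ultimately have "psd W" by (simp add: psd_def)
  moreover have "W \<bullet> proj_psd Z = 0"
    using proj_psd_orthogonal[of Z] by (simp add: W_def inner_diff_left)
  ultimately have "proj_psd (W - proj_psd Z) = W"
    using proj_psd_diff_complementary[OF _ psd_proj_psd] by blast
  then show ?thesis by (simp add: W_def)
qed

section \<open>Orthogonal projections and the subspaces \<open>T_S\<close>, \<open>T_X\<close>\<close>

lemma closest_point_subspace_orthogonal:
  fixes V :: "'a::euclidean_space set"
  assumes "subspace V" "v \<in> V"
  shows "(x - closest_point V x) \<bullet> v = 0"
proof -
  have cv: "convex V" and cl: "closed V" using assms(1) by (simp_all add: subspace_imp_convex closed_subspace)
  define p where "p = closest_point V x"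
  have pV: "p \<in> V" using closest_point_in_set[OF cl] assms(2) p_def by blast
  have "p + v \<in> V" "p - v \<in> V" using pV assms by (simp_all add: subspace_add subspace_diff)
  then have "(x - p) \<bullet> ((p + v) - p) \<le> 0" "(x - p) \<bullet> ((p - v) - p) \<le> 0"
    using closest_point_dot[OF cv cl] p_def by blast+
  then show ?thesis by (simp add: p_def)
qed

lemma closest_point_subspace_eqI:
  fixes V :: "'a::euclidean_space set"
  assumes "subspace V" "p \<in> V" "\<And>v. v \<in> V \<Longrightarrow> (x - p) \<bullet> v = 0"
  shows "closest_point V x = p"
proof -
  have "dist x p \<le> dist x z" if "z \<in> V" for z
  proof -
    have "(dist x z)\<^sup>2 = (norm ((x - p) + (p - z)))\<^sup>2" by (simp add: dist_norm)
    also have "\<dots> = (norm (x - p))\<^sup>2 + (norm (p - z))\<^sup>2"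
      using assms that by (intro norm_add_Pythagorean) (simp add: orthogonal_def subspace_diff)
    finally have "(dist x p)\<^sup>2 \<le> (dist x z)\<^sup>2" by (simp add: dist_norm)
    then show ?thesis by (rule power2_le_imp_le) simp
  qed
  then show ?thesis
    using closest_point_unique assms(1,2) by (metis closed_subspace subspace_imp_convex)
qed

lemma linear_closest_point_subspace:
  fixes V :: "'a::euclidean_space set"
  assumes V: "subspace V"
  shows "linear (closest_point V)"
proof -
  have inV: "closest_point V x \<in> V" for x
    using closest_point_in_set[OF closed_subspace[OF V]] subspace_0[OF V] by blast
  note orth = closest_point_subspace_orthogonal[OF V]
  show ?thesis
  proof (rule linearI)
    show "closest_point V (a + b) = closest_point V a + closest_point V b" for a b
      using inV orth[of _ a] orth[of _ b]
      by (intro closest_point_subspace_eqI[OF V])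
        (simp_all add: subspace_add[OF V] algebra_simps)
    show "closest_point V (r *\<^sub>R a) = r *\<^sub>R closest_point V a" for r a
      using inV orth[of _ a]
      by (intro closest_point_subspace_eqI[OF V])
        (simp_all add: subspace_scale[OF V] flip: scaleR_diff_right)
  qed
qed

lemma matrix_add_rdistrib: "(B + C) ** A = B ** A + C ** (A::real^'n^'m)"
  by (simp add: matrix_matrix_mult_def vec_eq_iff sum.distrib algebra_simps)

lemma subspace_T_S: "subspace (T_S P)"
  unfolding subspace_def T_S_def symmetric_mat_def
  by (simp add: transpose_add transpose_scalar matrix_add_ldistrib matrix_add_rdistrib
      matrix_scalar_ac scalar_matrix_assoc[symmetric] transpose_def vec_eq_iff)

lemma T_X_eq_T_S: "T_X = T_S"
  by (simp add: fun_eq_iff T_X_def T_S_def)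

lemma subspace_range_matrix_vector_mult: "subspace (range ((*v) (P::real^'n^'m)))"
  by (rule linear_subspace_image[OF matrix_vector_mul_linear subspace_UNIV])

lemma psd_norm_mv_sq_le:
  assumes "psd P"
  shows "(norm (P *v x))\<^sup>2 \<le> onorm ((*v) P) * (x \<bullet> (P *v x))"
proof (cases "P *v x = 0")
  case True
  then show ?thesis
    using assms onorm_pos_le[OF matrix_vector_mul_bounded_linear[of P]] by (simp add: psd_def)
next
  case False
  define y where "y = P *v x"
  have "((norm y)\<^sup>2)\<^sup>2 = (y \<bullet> (P *v x))\<^sup>2" by (simp add: y_def power2_norm_eq_inner)
  also have "\<dots> \<le> (y \<bullet> (P *v y)) * (x \<bullet> (P *v x))" by (rule psd_cauchy_schwarz[OF assms])
  also have "\<dots> \<le> (onorm ((*v) P) * (norm y)\<^sup>2) * (x \<bullet> (P *v x))"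
  proof (rule mult_right_mono)
    have "y \<bullet> (P *v y) \<le> norm y * norm (P *v y)" by (rule norm_cauchy_schwarz)
    also have "\<dots> \<le> norm y * (onorm ((*v) P) * norm y)"
      by (intro mult_left_mono onorm[OF matrix_vector_mul_bounded_linear]) simp
    finally show "y \<bullet> (P *v y) \<le> onorm ((*v) P) * (norm y)\<^sup>2" by (simp add: power2_eq_square mult_ac)
    show "0 \<le> x \<bullet> (P *v x)" using assms by (simp add: psd_def)
  qed
  finally have "(norm y)\<^sup>2 * (norm y)\<^sup>2 \<le> (onorm ((*v) P) * (x \<bullet> (P *v x))) * (norm y)\<^sup>2"
    by (simp add: power2_eq_square mult_ac)
  moreover have "0 < (norm y)\<^sup>2" using False by (simp add: y_def)
  ultimately show ?thesis unfolding y_def by (rule mult_right_le_imp_le)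
qed

lemma psd_form_lower_bound_on_range:
  fixes P :: "real^'n^'n"
  assumes "psd P"
  obtains c where "0 < c" "\<And>p. p \<in> range ((*v) P) \<Longrightarrow> c * (norm p)\<^sup>2 \<le> p \<bullet> (P *v p)"
proof -
  let ?U = "range ((*v) P)"
  note U = subspace_range_matrix_vector_mult[of P]
  have "p = 0" if p: "p \<in> ?U" and Pp: "P *v p = 0" for p
  proof -
    obtain v where "p = P *v v" using p by blast
    then have "p \<bullet> p = v \<bullet> (P *v p)"
      using assms symmetric_mat_mv_inner[of P v p] by (simp add: psd_def)
    then show "p = 0" using Pp by simp
  qed
  then obtain e where e: "0 < e" "\<And>p. p \<in> ?U \<Longrightarrow> e * norm p \<le> norm (P *v p)"
    using injective_imp_isometric[OF closed_subspace[OF U] U matrix_vector_mul_bounded_linear]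
    by metis
  define B where "B = onorm ((*v) P)"
  have B: "0 \<le> B" unfolding B_def by (rule onorm_pos_le[OF matrix_vector_mul_bounded_linear])
  show ?thesis
  proof (rule that[of "e\<^sup>2 / (B + 1)"])
    show "0 < e\<^sup>2 / (B + 1)" using e(1) B by simp
    fix p assume "p \<in> ?U"
    have form: "0 \<le> p \<bullet> (P *v p)" using assms by (simp add: psd_def)
    have "e\<^sup>2 * (norm p)\<^sup>2 \<le> (norm (P *v p))\<^sup>2"
      using e(2)[OF \<open>p \<in> ?U\<close>] e(1) by (simp flip: power_mult_distrib add: power_mono)
    also have "\<dots> \<le> B * (p \<bullet> (P *v p))" unfolding B_def by (rule psd_norm_mv_sq_le[OF assms])
    also have "\<dots> \<le> (B + 1) * (p \<bullet> (P *v p))" using form by (simp add: distrib_right)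
    finally show "e\<^sup>2 / (B + 1) * (norm p)\<^sup>2 \<le> p \<bullet> (P *v p)"
      using B by (simp add: field_simps)
  qed
qed

lemma mv_eq_0_if_orthogonal_T_S:
  assumes symD: "symmetric_mat D" and symP: "symmetric_mat P"
    and orth: "\<And>M. M \<in> T_S P \<Longrightarrow> D \<bullet> M = 0" and Pq: "P *v q = 0"
  shows "D *v q = 0"
proof -
  define M where "M = outer q (D *v q) + outer (D *v q) q"
  have "P ** M ** P *v z = 0" for z
    using Pq symmetric_mat_mv_inner[OF symP, of q z]
    by (simp add: M_def matrix_vector_mul_assoc[symmetric] matrix_vector_mult_add_rdistrib outer_mv
        matrix_vector_right_distrib matrix_vector_mult_scaleR inner_commute)
  then have "M \<in> T_S P"
    by (simp add: T_S_def M_def symmetric_mat_outer_add matrix_eq)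
  then have "D \<bullet> M = 0" by (rule orth)
  moreover have "D \<bullet> M = 2 * ((D *v q) \<bullet> (D *v q))"
    using symmetric_mat_mv_inner[OF symD, of q "D *v q"]
    by (simp add: M_def inner_add_right inner_outer inner_commute)
  ultimately show ?thesis by simp
qed

text \<open>Near a positive semidefinite \<open>P\<close>, a symmetric matrix can only lose semidefiniteness through
  a component in \<open>T_S P\<close>: off it, the form of \<open>X\<close> vanishes on the kernel of \<open>P\<close> and is a small
  perturbation of the positive definite form of \<open>P\<close> on its range.\<close>
lemma psd_if_orthogonal_T_S_near:
  fixes P :: "real^'n^'n"
  assumes psdP: "psd P"
  obtains c where "0 < c"
    "\<And>X. symmetric_mat X \<Longrightarrow> (\<And>M. M \<in> T_S P \<Longrightarrow> (X - P) \<bullet> M = 0) \<Longrightarrow> norm (X - P) \<le> c \<Longrightarrow> psd X"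
proof -
  obtain c where c: "0 < c" "\<And>p. p \<in> range ((*v) P) \<Longrightarrow> c * (norm p)\<^sup>2 \<le> p \<bullet> (P *v p)"
    using psd_form_lower_bound_on_range[OF psdP] by blast
  have symP: "symmetric_mat P" using psdP by (simp add: psd_def)
  have "psd X" if symX: "symmetric_mat X" and orth: "\<And>M. M \<in> T_S P \<Longrightarrow> (X - P) \<bullet> M = 0"
    and small: "norm (X - P) \<le> c" for X
  proof -
    define D where "D = X - P"
    have symD: "symmetric_mat D"
      using symX symP by (simp add: D_def symmetric_mat_diff)
    have "0 \<le> x \<bullet> (X *v x)" for x
    proof -
      let ?U = "range ((*v) P)"
      have spanU: "span ?U = ?U" using subspace_range_matrix_vector_mult by simp
      obtain p q where p: "p \<in> ?U" and q: "\<And>w. w \<in> ?U \<Longrightarrow> q \<bullet> w = 0" and x: "x = p + q"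
        using orthogonal_subspace_decomp_exists[of ?U x] unfolding spanU orthogonal_def by blast
      have Pq: "P *v q = 0"
        using q[of "P *v (P *v q)"] symmetric_mat_mv_inner[OF symP, of q "P *v q"] by simp
      have Dq: "D *v q = 0"
        using mv_eq_0_if_orthogonal_T_S[OF symD symP _ Pq] orth by (simp add: D_def)
      have "x \<bullet> (X *v x) = p \<bullet> (P *v p) + p \<bullet> (D *v p)"
        using Pq Dq q[of "P *v p"] symmetric_mat_mv_inner[OF symD, of q p]
        by (simp add: D_def x algebra_simps inner_commute)
      moreover have "\<bar>p \<bullet> (D *v p)\<bar> \<le> c * (norm p)\<^sup>2"
      proof -
        have "\<bar>p \<bullet> (D *v p)\<bar> = \<bar>D \<bullet> outer p p\<bar>" by (simp add: inner_outer)
        also have "\<dots> \<le> norm D * (norm p)\<^sup>2"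
          using Cauchy_Schwarz_ineq2[of D "outer p p"] by (simp add: norm_outer power2_eq_square)
        also have "\<dots> \<le> c * (norm p)\<^sup>2" using small by (simp add: D_def mult_right_mono)
        finally show ?thesis .
      qed
      ultimately show ?thesis using c(2)[OF p] by linarith
    qed
    then show ?thesis using symX by (simp add: psd_def)
  qed
  with c(1) show ?thesis using that by blast
qed

lemma closest_point_T_S_self:
  assumes "psd P"
  shows "closest_point (T_S P) P = 0"
  using assms subspace_0[OF subspace_T_S]
  by (intro closest_point_subspace_eqI[OF subspace_T_S]) (simp_all add: psd_inner_eq_0_if_sandwich_eq_0 T_S_def)

lemma orthogonal_T_S_if_closest_point_eq_0:
  assumes "psd P" "closest_point (T_S P) X = 0" "M \<in> T_S P"
  shows "(X - P) \<bullet> M = 0"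
  using closest_point_subspace_orthogonal[OF subspace_T_S assms(3), of X] assms
  by (simp add: inner_diff_left psd_inner_eq_0_if_sandwich_eq_0 T_S_def)

lemma mem_T_S_if_complementary:
  assumes "psd A" "psd B" "A \<bullet> B = 0"
  shows "B \<in> T_S A"
  using psd_mult_eq_0_if_inner_eq_0[OF assms] assms(2)
  by (simp add: T_S_def psd_def flip: matrix_mul_assoc)

text \<open>\<open>Ss \<in> T_S Xs\<close> and \<open>Xs \<in> T_S Ss\<close>, so every term of \<open>X \<bullet> S\<close> other than the cross term vanishes.\<close>
lemma inner_eq_0_near_complementary:
  assumes "psd Xs" "psd Ss" "Xs \<bullet> Ss = 0"
    and "\<And>M. M \<in> T_S Xs \<Longrightarrow> (X - Xs) \<bullet> M = 0" "\<And>M. M \<in> T_S Ss \<Longrightarrow> (S - Ss) \<bullet> M = 0"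
    and "(X - Xs) \<bullet> (S - Ss) = 0"
  shows "X \<bullet> S = 0"
proof -
  have "(X - Xs) \<bullet> Ss = 0" using assms(4) mem_T_S_if_complementary[OF assms(1-3)] .
  moreover have "(S - Ss) \<bullet> Xs = 0"
    using assms(5) mem_T_S_if_complementary[OF assms(2,1)] assms(3) by (simp add: inner_commute)
  ultimately show ?thesis
    using assms(3,6) by (simp add: inner_diff_left inner_diff_right inner_commute)
qed

section \<open>Norm estimates and Hoffman's error bound\<close>

lemma norm_le_norm_add_orthogonal:
  fixes a b :: "'a::real_inner"
  assumes "a \<bullet> b = 0"
  shows "norm a \<le> norm (a + b)" and "norm b \<le> norm (a + b)"
proof -
  have "(norm (a + b))\<^sup>2 = (norm a)\<^sup>2 + (norm b)\<^sup>2"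
    using assms by (simp add: norm_add_Pythagorean orthogonal_def)
  then have "(norm a)\<^sup>2 \<le> (norm (a + b))\<^sup>2" "(norm b)\<^sup>2 \<le> (norm (a + b))\<^sup>2" by simp_all
  then show "norm a \<le> norm (a + b)" "norm b \<le> norm (a + b)" by (auto elim: power2_le_imp_le)
qed

lemma norm_tuple4_le: "norm (a, b, c, d) \<le> norm a + norm b + norm c + norm d"
  using norm_Pair_le[of a "(b, c, d)"] norm_Pair_le[of b "(c, d)"] norm_Pair_le[of c d] by simp

lemma norm_diff_scaleR_le_norm_Pair:
  fixes a b :: "'a::real_normed_vector"
  assumes "0 \<le> \<sigma>"
  shows "norm (a - \<sigma> *\<^sub>R b) \<le> (1 + \<sigma>) * norm (a, b)"
proof -
  have "norm (a - \<sigma> *\<^sub>R b) \<le> norm a + \<sigma> * norm b"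
    using norm_triangle_ineq4[of a "\<sigma> *\<^sub>R b"] assms by simp
  also have "\<dots> \<le> norm (a, b) + \<sigma> * norm (a, b)"
    using assms by (intro add_mono mult_left_mono norm_fst_le norm_snd_le)
  finally show ?thesis by (simp add: algebra_simps)
qed

text \<open>A Hoffman-type bound for a consistent linear system: decompose \<open>x - x\<^sub>1\<close> along the kernel
  of \<open>f\<close> and its orthogonal complement, on which \<open>f\<close> is bounded below.\<close>
lemma linear_eq_error_bound:
  fixes f :: "'a::euclidean_space \<Rightarrow> 'b::euclidean_space"
  assumes lf: "linear f" and x1: "f x1 = c"
  obtains \<kappa> where "0 < \<kappa>" "\<And>x. \<exists>x'. f x' = c \<and> norm (x - x') \<le> \<kappa> * norm (f x - c)"
proof -
  define K where "K = {x. f x = 0}"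
  have K: "subspace K" unfolding K_def using lf by (rule linear_subspace_kernel)
  define K' where "K' = {z. \<forall>w\<in>K. z \<bullet> w = 0}"
  have K': "subspace K'" unfolding K'_def subspace_def by (auto simp: inner_add_left)
  have "z = 0" if "z \<in> K'" "f z = 0" for z
    using that by (auto simp: K_def K'_def)
  then obtain e where e: "0 < e" "\<And>z. z \<in> K' \<Longrightarrow> e * norm z \<le> norm (f z)"
    using injective_imp_isometric[OF closed_subspace[OF K'] K' lf[unfolded linear_conv_bounded_linear]]
    by blast
  have "\<exists>x'. f x' = c \<and> norm (x - x') \<le> 1 / e * norm (f x - c)" for x
  proof -
    have spanK: "span K = K" using K by simp
    obtain y z where y: "y \<in> K" and zK: "\<And>w. w \<in> K \<Longrightarrow> orthogonal z w" and xyz: "x - x1 = y + z"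
      using orthogonal_subspace_decomp_exists[of K "x - x1"] unfolding spanK by metis
    have z: "z \<in> K'" using zK by (simp add: K'_def orthogonal_def)
    have fy: "f y = 0" using y by (simp add: K_def)
    have "f x - c = f y + f z" using xyz x1 lf by (metis linear_add linear_diff)
    then have fz: "f z = f x - c" using fy by simp
    show ?thesis
    proof (intro exI conjI)
      show "f (x1 + y) = c" using x1 fy lf by (simp add: linear_add)
      have "e * norm z \<le> norm (f x - c)" using e(2)[OF z] fz by simp
      then have "norm z \<le> norm (f x - c) / e" using e(1) by (simp add: field_simps)
      then show "norm (x - (x1 + y)) \<le> 1 / e * norm (f x - c)"
        using xyz by (simp add: algebra_simps)
    qed
  qed
  then show ?thesis using that[of "1 / e"] e(1) by simp
qed

section \<open>The ADMM operator\<close>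

lemma linear_Aop: "linear (Aop Ai)"
  by (rule linearI) (simp_all add: Aop_def vec_eq_iff inner_add_right)

lemma linear_Astar: "linear (Astar Ai)"
  by (rule linearI) (simp_all add: Astar_def scaleR_add_left sum.distrib scaleR_sum_right)

lemma linear_AAinv: "linear (AAinv Ai)"
  unfolding AAinv_def by (rule matrix_vector_mul_linear)

lemma Astar_inner: "Astar Ai y \<bullet> X = y \<bullet> Aop Ai X"
  by (simp add: Astar_def Aop_def inner_sum_left inner_vec_def[where 'a=real])

lemma symmetric_mat_Astar: "(\<And>i. symmetric_mat (Ai i)) \<Longrightarrow> symmetric_mat (Astar Ai y)"
  unfolding Astar_def
  by (rule subspace_sum[OF subspace_symmetric_mat, simplified]) (simp add: symmetric_mat_scaleR)

text \<open>\<open>matrix_inv\<close> is junk unless its argument is invertible; surjectivity of \<open>calA\<close> makes the Gram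
  matrix of \<open>calA calA*\<close> injective.\<close>
lemma Aop_Astar_AAinv:
  assumes "surj (Aop Ai)"
  shows "Aop Ai (Astar Ai (AAinv Ai w)) = w" and "AAinv Ai (Aop Ai (Astar Ai v)) = v"
proof -
  define G where "G = matrix (\<lambda>v. Aop Ai (Astar Ai v))"
  have "linear (\<lambda>v. Aop Ai (Astar Ai v))"
    using linear_compose[OF linear_Astar linear_Aop] by (simp add: o_def)
  then have G: "G *v v = Aop Ai (Astar Ai v)" for v
    by (simp add: G_def matrix_works)
  have "x = 0" if "G *v x = 0" for x
  proof -
    have "Astar Ai x \<bullet> Astar Ai x = 0" using that by (simp add: G Astar_inner)
    moreover obtain X where "Aop Ai X = x" using assms by (metis surjD)
    ultimately show "x = 0" using Astar_inner[of Ai x X] by simp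
  qed
  then obtain B where "B ** G = mat 1" using matrix_left_invertible_ker by blast
  then have "\<exists>B. G ** B = mat 1 \<and> B ** G = mat 1" using matrix_left_right_inverse by blast
  then have "G ** matrix_inv G = mat 1" "matrix_inv G ** G = mat 1"
    unfolding matrix_inv_def by (metis (mono_tags, lifting) someI_ex)+
  then show "Aop Ai (Astar Ai (AAinv Ai w)) = w" "AAinv Ai (Aop Ai (Astar Ai v)) = v"
    by (simp_all add: AAinv_def G_def[symmetric] G[symmetric] matrix_vector_mul_assoc)
qed

text \<open>The orthogonal projection onto the range of \<open>calA*\<close>.\<close>
definition Aproj :: "('m::finite \<Rightarrow> real^'n^'n) \<Rightarrow> real^'n^'n \<Rightarrow> real^'n^'n" where
  "Aproj Ai W = Astar Ai (AAinv Ai (Aop Ai W))"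

lemma linear_Aproj: "linear (Aproj Ai)"
  unfolding Aproj_def
  using linear_compose[OF linear_compose[OF linear_Aop linear_AAinv] linear_Astar] by (simp add: o_def)

lemma Aop_Aproj: "surj (Aop Ai) \<Longrightarrow> Aop Ai (Aproj Ai W) = Aop Ai W"
  by (simp add: Aproj_def Aop_Astar_AAinv)

lemma Aproj_Astar: "surj (Aop Ai) \<Longrightarrow> Aproj Ai (Astar Ai y) = Astar Ai y"
  by (simp add: Aproj_def Aop_Astar_AAinv)

lemma Astar_inner_diff_Aproj: "surj (Aop Ai) \<Longrightarrow> Astar Ai y \<bullet> (W - Aproj Ai W) = 0"
  by (simp add: Astar_inner linear_diff[OF linear_Aop] Aop_Aproj)

lemma symmetric_mat_admm_map:
  assumes "\<And>i. symmetric_mat (Ai i)" "symmetric_mat C" "symmetric_mat Z"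
  shows "symmetric_mat (admm_map Ai b C \<sigma> Z)"
  unfolding admm_map_def
  using psd_proj_psd[of Z]
  by (intro symmetric_mat_add symmetric_mat_diff symmetric_mat_scaleR symmetric_mat_Astar assms)
    (simp_all add: psd_def)

text \<open>With \<open>X = \<Pi>(Z)\<close> and \<open>Z = X - \<Pi>(-Z)\<close>, the ADMM step splits into a component in the range of
  \<open>calA*\<close> measuring primal infeasibility and one orthogonal to it measuring dual infeasibility.\<close>
lemma admm_map_minus_self:
  fixes C :: "real^'n^'n" and \<sigma> :: real
  assumes "symmetric_mat Z"
  defines "V \<equiv> proj_psd (- Z) - \<sigma> *\<^sub>R C"
  shows "admm_map Ai b C \<sigma> Z - Z = Astar Ai (AAinv Ai (b - Aop Ai (proj_psd Z))) + (V - Aproj Ai V)"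
proof -
  define X W where "X = proj_psd Z" and "W = proj_psd (- Z)"
  have Z: "Z = X - W" unfolding X_def W_def by (rule proj_psd_moreau[OF assms(1)])
  have "Aproj Ai (Z - 2 *\<^sub>R X) = Aproj Ai (- X - W)"
    by (rule arg_cong[where f = "Aproj Ai"]) (simp add: Z scaleR_2 algebra_simps)
  also have "\<dots> = - Aproj Ai X - Aproj Ai W"
    by (simp add: linear_diff[OF linear_Aproj] linear_neg[OF linear_Aproj])
  finally have "admm_map Ai b C \<sigma> Z
      = (- Aproj Ai X - Aproj Ai W) + X + Astar Ai (AAinv Ai b) + \<sigma> *\<^sub>R Aproj Ai C - \<sigma> *\<^sub>R C"
    unfolding admm_map_def Aproj_def X_def by simp
  then have "admm_map Ai b C \<sigma> Z - Z
      = (Astar Ai (AAinv Ai b) - Aproj Ai X) + ((W - \<sigma> *\<^sub>R C) - (Aproj Ai W - \<sigma> *\<^sub>R Aproj Ai C))"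
    by (simp only:) (simp add: Z algebra_simps)
  moreover have "Astar Ai (AAinv Ai (b - Aop Ai X)) = Astar Ai (AAinv Ai b) - Aproj Ai X"
    by (simp add: Aproj_def linear_diff[OF linear_Astar] linear_diff[OF linear_AAinv])
  moreover have "Aproj Ai (W - \<sigma> *\<^sub>R C) = Aproj Ai W - \<sigma> *\<^sub>R Aproj Ai C"
    by (simp add: linear_diff[OF linear_Aproj] linear_scale[OF linear_Aproj])
  ultimately show ?thesis unfolding V_def X_def[symmetric] W_def[symmetric] by simp
qed

lemma admm_residual_norm_le:
  fixes C :: "real^'n^'n" and \<sigma> :: real
  assumes "surj (Aop Ai)" "symmetric_mat Z"
  defines "V \<equiv> proj_psd (- Z) - \<sigma> *\<^sub>R C"
  shows "norm (Aop Ai (proj_psd Z) - b) \<le> onorm (Aop Ai) * norm (admm_map Ai b C \<sigma> Z - Z)"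
    and "norm (V - Aproj Ai V) \<le> norm (admm_map Ai b C \<sigma> Z - Z)"
proof -
  define a where "a = Astar Ai (AAinv Ai (b - Aop Ai (proj_psd Z)))"
  have res: "admm_map Ai b C \<sigma> Z - Z = a + (V - Aproj Ai V)"
    unfolding a_def V_def by (rule admm_map_minus_self[OF assms(2)])
  have orth: "a \<bullet> (V - Aproj Ai V) = 0"
    unfolding a_def by (rule Astar_inner_diff_Aproj[OF assms(1)])
  have "norm (Aop Ai (proj_psd Z) - b) = norm (Aop Ai a)"
    by (simp add: a_def Aop_Astar_AAinv[OF assms(1)] norm_minus_commute)
  also have "\<dots> \<le> onorm (Aop Ai) * norm a"
    by (rule onorm[OF linear_Aop[unfolded linear_conv_bounded_linear]])
  also have "\<dots> \<le> onorm (Aop Ai) * norm (admm_map Ai b C \<sigma> Z - Z)"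
    unfolding res using norm_le_norm_add_orthogonal(1)[OF orth]
    by (rule mult_left_mono) (rule onorm_pos_le[OF linear_Aop[unfolded linear_conv_bounded_linear]])
  finally show "norm (Aop Ai (proj_psd Z) - b) \<le> onorm (Aop Ai) * norm (admm_map Ai b C \<sigma> Z - Z)" .
  show "norm (V - Aproj Ai V) \<le> norm (admm_map Ai b C \<sigma> Z - Z)"
    unfolding res by (rule norm_le_norm_add_orthogonal(2)[OF orth])
qed

lemma inner_diff_eq_0_if_feasible_directions:
  assumes "Aop Ai X = Aop Ai X'" "S - Aproj Ai S = S' - Aproj Ai S'"
  shows "(X - X') \<bullet> (S - S') = 0"
proof -
  have "S - S' = (S - Aproj Ai S) - (S' - Aproj Ai S') + (Aproj Ai S - Aproj Ai S')"
    by (simp add: algebra_simps)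
  also have "\<dots> = Aproj Ai (S - S')" using assms(2) by (simp add: linear_diff[OF linear_Aproj])
  finally have "(X - X') \<bullet> (S - S') = AAinv Ai (Aop Ai (S - S')) \<bullet> Aop Ai (X - X')"
    by (metis Aproj_def Astar_inner inner_commute)
  also have "\<dots> = 0" using assms(1) by (simp add: linear_diff[OF linear_Aop])
  finally show ?thesis .
qed

lemma diff_scaleR_mem_admm_fixed:
  assumes "0 < \<sigma>" "psd X" "psd S" "X \<bullet> S = 0" "Aop Ai X = b" "S - Aproj Ai S = C - Aproj Ai C"
  shows "X - \<sigma> *\<^sub>R S \<in> admm_fixed Ai b C \<sigma>"
proof -
  have psd\<sigma>S: "psd (\<sigma> *\<^sub>R S)" using psd_scaleR[OF assms(3)] assms(1) by simp
  have "X \<bullet> (\<sigma> *\<^sub>R S) = 0" using assms(4) by simp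
  then have projX: "proj_psd (X - \<sigma> *\<^sub>R S) = X" and projS: "proj_psd (- (X - \<sigma> *\<^sub>R S)) = \<sigma> *\<^sub>R S"
    using proj_psd_diff_complementary[OF assms(2) psd\<sigma>S] proj_psd_diff_complementary[OF psd\<sigma>S assms(2)]
    by (simp_all add: inner_commute)
  define V where "V = \<sigma> *\<^sub>R S - \<sigma> *\<^sub>R C"
  have "symmetric_mat (X - \<sigma> *\<^sub>R S)"
    using assms(2,3) by (intro symmetric_mat_diff symmetric_mat_scaleR) (simp_all add: psd_def)
  from admm_map_minus_self[OF this, where Ai = Ai and b = b and \<sigma> = \<sigma> and C = C]
  have "admm_map Ai b C \<sigma> (X - \<sigma> *\<^sub>R S) - (X - \<sigma> *\<^sub>R S) = Astar Ai (AAinv Ai (b - b)) + (V - Aproj Ai V)"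
    by (simp only: projX projS assms(5) V_def)
  also have "\<dots> = \<sigma> *\<^sub>R ((S - Aproj Ai S) - (C - Aproj Ai C))"
    by (simp add: V_def linear_0[OF linear_AAinv] linear_0[OF linear_Astar] linear_diff[OF linear_Aproj]
        linear_scale[OF linear_Aproj] scaleR_diff_right)
  also have "\<dots> = 0" using assms(6) by simp
  finally show ?thesis by (simp add: admm_fixed_def)
qed

section \<open>A local error bound at a KKT point\<close>

text \<open>The KKT conditions at \<open>(Xs, Ss)\<close> with semidefiniteness and complementarity replaced by
  linear conditions; near \<open>(Xs, Ss)\<close> its solutions are again KKT pairs (\<open>admm_fixed_near_KKT\<close>).\<close>
definition kkt_lin :: "('m::finite \<Rightarrow> real^'n^'n) \<Rightarrow> real^'n^'n \<Rightarrow> real^'n^'n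
    \<Rightarrow> (real^'n^'n) \<times> (real^'n^'n)
    \<Rightarrow> (real^'m) \<times> (real^'n^'n) \<times> (real^'n^'n) \<times> (real^'n^'n) \<times> (real^'n^'n) \<times> (real^'n^'n)" where
  "kkt_lin Ai Xs Ss = (\<lambda>(X, S). (Aop Ai X, S - Aproj Ai S, closest_point (T_S Xs) X,
     closest_point (T_X Ss) S, X - transpose X, S - transpose S))"

definition kkt_rhs :: "('m::finite \<Rightarrow> real^'n^'n) \<Rightarrow> real^'m \<Rightarrow> real^'n^'n
    \<Rightarrow> (real^'m) \<times> (real^'n^'n) \<times> (real^'n^'n) \<times> (real^'n^'n) \<times> (real^'n^'n) \<times> (real^'n^'n)" where
  "kkt_rhs Ai b C = (b, C - Aproj Ai C, 0, 0, 0, 0)"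

lemma linear_kkt_lin: "linear (kkt_lin Ai Xs Ss)"
proof -
  note lin = linear_Aop linear_Aproj linear_closest_point_subspace[OF subspace_T_S]
  show ?thesis
    unfolding kkt_lin_def T_X_eq_T_S
    by (rule linearI) (auto simp: linear_add[OF lin(1)] linear_add[OF lin(2)] linear_add[OF lin(3)]
        linear_scale[OF lin(1)] linear_scale[OF lin(2)] linear_scale[OF lin(3)]
        transpose_add transpose_scalar algebra_simps)
qed

lemma kkt_lin_eq_kkt_rhs_iff:
  "kkt_lin Ai Xs Ss (X, S) = kkt_rhs Ai b C \<longleftrightarrow>
     Aop Ai X = b \<and> S - Aproj Ai S = C - Aproj Ai C \<and> closest_point (T_S Xs) X = 0
     \<and> closest_point (T_S Ss) S = 0 \<and> symmetric_mat X \<and> symmetric_mat S"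
  by (auto simp: kkt_lin_def kkt_rhs_def T_X_eq_T_S symmetric_mat_def)

lemma kkt_lin_KKT:
  assumes "surj (Aop Ai)" "KKT Ai b C Xs ys Ss"
  shows "kkt_lin Ai Xs Ss (Xs, Ss) = kkt_rhs Ai b C"
proof -
  have "Ss = C - Astar Ai ys" using assms(2) by (auto simp: KKT_def)
  then have "Ss - Aproj Ai Ss = C - Aproj Ai C"
    by (simp add: linear_diff[OF linear_Aproj] Aproj_Astar[OF assms(1)])
  then show ?thesis
    using assms(2) by (simp add: kkt_lin_eq_kkt_rhs_iff KKT_def closest_point_T_S_self psd_def)
qed

lemma admm_fixed_near_KKT:
  assumes surjA: "surj (Aop Ai)" and KKT: "KKT Ai b C Xs ys Ss" and "0 < \<sigma>"
  obtains \<epsilon> where "0 < \<epsilon>"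
    "\<And>X S. kkt_lin Ai Xs Ss (X, S) = kkt_rhs Ai b C \<Longrightarrow> norm ((X, S) - (Xs, Ss)) \<le> \<epsilon>
       \<Longrightarrow> X - \<sigma> *\<^sub>R S \<in> admm_fixed Ai b C \<sigma>"
proof -
  have psdXs: "psd Xs" and psdSs: "psd Ss" and XsSs: "Xs \<bullet> Ss = 0" and AXs: "Aop Ai Xs = b"
    using KKT by (simp_all add: KKT_def)
  obtain c1 where c1: "0 < c1" "\<And>X. symmetric_mat X \<Longrightarrow> (\<And>M. M \<in> T_S Xs \<Longrightarrow> (X - Xs) \<bullet> M = 0)
      \<Longrightarrow> norm (X - Xs) \<le> c1 \<Longrightarrow> psd X"
    using psd_if_orthogonal_T_S_near[OF psdXs] by blast
  obtain c2 where c2: "0 < c2" "\<And>S. symmetric_mat S \<Longrightarrow> (\<And>M. M \<in> T_S Ss \<Longrightarrow> (S - Ss) \<bullet> M = 0)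
      \<Longrightarrow> norm (S - Ss) \<le> c2 \<Longrightarrow> psd S"
    using psd_if_orthogonal_T_S_near[OF psdSs] by blast
  have "X - \<sigma> *\<^sub>R S \<in> admm_fixed Ai b C \<sigma>"
    if sol: "kkt_lin Ai Xs Ss (X, S) = kkt_rhs Ai b C" and near: "norm ((X, S) - (Xs, Ss)) \<le> min c1 c2"
    for X S
  proof -
    have AX: "Aop Ai X = b" and QS: "S - Aproj Ai S = C - Aproj Ai C"
      using sol by (simp_all add: kkt_lin_eq_kkt_rhs_iff)
    have perpX: "\<And>M. M \<in> T_S Xs \<Longrightarrow> (X - Xs) \<bullet> M = 0"
      and perpS: "\<And>M. M \<in> T_S Ss \<Longrightarrow> (S - Ss) \<bullet> M = 0"
      using sol orthogonal_T_S_if_closest_point_eq_0[OF psdXs] orthogonal_T_S_if_closest_point_eq_0[OF psdSs]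
      by (simp_all add: kkt_lin_eq_kkt_rhs_iff)
    have "norm (X - Xs) \<le> c1" "norm (S - Ss) \<le> c2"
      using near norm_fst_le[of "X - Xs" "S - Ss"] norm_snd_le[of "S - Ss" "X - Xs"] by simp_all
    then have psdX: "psd X" and psdS: "psd S"
      using sol c1(2)[OF _ perpX] c2(2)[OF _ perpS] by (simp_all add: kkt_lin_eq_kkt_rhs_iff)
    have "Ss - Aproj Ai Ss = C - Aproj Ai C"
      using kkt_lin_KKT[OF surjA KKT] by (simp add: kkt_lin_eq_kkt_rhs_iff)
    with AX AXs QS have "(X - Xs) \<bullet> (S - Ss) = 0"
      by (intro inner_diff_eq_0_if_feasible_directions[where Ai = Ai]) simp_all
    then have "X \<bullet> S = 0"
      using inner_eq_0_near_complementary[OF psdXs psdSs XsSs, of X S] perpX perpS by blast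
    then show ?thesis by (rule diff_scaleR_mem_admm_fixed[OF \<open>0 < \<sigma>\<close> psdX psdS _ AX QS])
  qed
  then show ?thesis using that[of "min c1 c2"] c1(1) c2(1) by simp
qed

lemma kkt_lin_residual_le:
  assumes surjA: "surj (Aop Ai)" and "0 < \<sigma>" and symZ: "symmetric_mat Z"
  defines "X \<equiv> proj_psd Z" and "S \<equiv> (1 / \<sigma>) *\<^sub>R proj_psd (- Z)"
  shows "norm (kkt_lin Ai Xs Ss (X, S) - kkt_rhs Ai b C)
    \<le> (onorm (Aop Ai) + 1 + 1 / \<sigma>) * (norm (admm_map Ai b C \<sigma> Z - Z)
         + norm (closest_point (T_S Xs) X) + \<sigma> * norm (closest_point (T_X Ss) S))"
proof -
  define t r1 r2 where "t = norm (admm_map Ai b C \<sigma> Z - Z)"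
    and "r1 = norm (closest_point (T_S Xs) X)" and "r2 = norm (closest_point (T_X Ss) S)"
  define B where "B = onorm (Aop Ai)"
  have B: "0 \<le> B" unfolding B_def by (rule onorm_pos_le[OF linear_Aop[unfolded linear_conv_bounded_linear]])
  have "symmetric_mat X" "symmetric_mat S"
    using psd_proj_psd[of Z] psd_proj_psd[of "- Z"] by (simp_all add: X_def S_def psd_def symmetric_mat_scaleR)
  then have "kkt_lin Ai Xs Ss (X, S) - kkt_rhs Ai b C = (Aop Ai X - b, (S - Aproj Ai S) - (C - Aproj Ai C),
      closest_point (T_S Xs) X, closest_point (T_X Ss) S, 0)"
    by (simp add: kkt_lin_def kkt_rhs_def symmetric_mat_def zero_prod_def)
  also have "norm \<dots> \<le> norm (Aop Ai X - b) + norm ((S - Aproj Ai S) - (C - Aproj Ai C)) + r1 + r2"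
    using norm_tuple4_le[of "Aop Ai X - b" _ _ "(closest_point (T_X Ss) S, 0)"]
    by (simp add: r1_def r2_def)
  also have "\<dots> \<le> B * t + t / \<sigma> + r1 + r2"
  proof -
    have "(S - Aproj Ai S) - (C - Aproj Ai C)
        = (1 / \<sigma>) *\<^sub>R ((proj_psd (- Z) - \<sigma> *\<^sub>R C) - Aproj Ai (proj_psd (- Z) - \<sigma> *\<^sub>R C))"
      using \<open>0 < \<sigma>\<close> by (simp add: S_def linear_diff[OF linear_Aproj] linear_scale[OF linear_Aproj] algebra_simps)
    then have "norm ((S - Aproj Ai S) - (C - Aproj Ai C)) \<le> t / \<sigma>"
      using admm_residual_norm_le(2)[OF surjA symZ, where \<sigma> = \<sigma> and C = C and b = b] \<open>0 < \<sigma>\<close>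
      by (simp add: t_def divide_right_mono)
    moreover have "norm (Aop Ai X - b) \<le> B * t"
      unfolding B_def t_def X_def by (rule admm_residual_norm_le(1)[OF surjA symZ])
    ultimately show ?thesis by simp
  qed
  also have "\<dots> \<le> (B + 1 + 1 / \<sigma>) * (t + r1 + \<sigma> * r2)"
    using B \<open>0 < \<sigma>\<close> by (simp add: r1_def r2_def t_def algebra_simps)
  finally show ?thesis by (simp add: B_def t_def r1_def r2_def)
qed

lemma admm_fixed_within_kkt_residual:
  assumes surjA: "surj (Aop Ai)" and KKT: "KKT Ai b C Xs ys Ss" and "0 < \<sigma>"
  obtains \<epsilon> \<kappa> where "0 < \<epsilon>" "0 < \<kappa>"
    "\<And>X S. norm ((X, S) - (Xs, Ss)) < \<epsilon> \<Longrightarrow> \<exists>X' S'. X' - \<sigma> *\<^sub>R S' \<in> admm_fixed Ai b C \<sigma>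
       \<and> norm ((X, S) - (X', S')) \<le> \<kappa> * norm (kkt_lin Ai Xs Ss (X, S) - kkt_rhs Ai b C)"
proof -
  let ?f = "kkt_lin Ai Xs Ss" and ?c = "kkt_rhs Ai b C"
  have f_star: "?f (Xs, Ss) = ?c" by (rule kkt_lin_KKT[OF surjA KKT])
  have lin: "linear ?f" by (rule linear_kkt_lin)
  then have bl: "bounded_linear ?f" by (simp add: linear_conv_bounded_linear)
  obtain \<kappa> where \<kappa>: "0 < \<kappa>" "\<And>p. \<exists>p'. ?f p' = ?c \<and> norm (p - p') \<le> \<kappa> * norm (?f p - ?c)"
    using linear_eq_error_bound[OF lin f_star] by blast
  obtain \<epsilon> where \<epsilon>: "0 < \<epsilon>" "\<And>X S. ?f (X, S) = ?c \<Longrightarrow> norm ((X, S) - (Xs, Ss)) \<le> \<epsilon>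
      \<Longrightarrow> X - \<sigma> *\<^sub>R S \<in> admm_fixed Ai b C \<sigma>"
    using admm_fixed_near_KKT[OF surjA KKT \<open>0 < \<sigma>\<close>] by blast
  define B where "B = onorm ?f"
  have f_bound: "norm (?f p - ?c) \<le> B * norm (p - (Xs, Ss))" for p
    using onorm[OF bl, where x = "p - (Xs, Ss)"] by (simp add: B_def f_star linear_diff[OF lin])
  have \<kappa>B: "0 < 1 + \<kappa> * B" using \<kappa>(1) onorm_pos_le[OF bl] by (simp add: B_def add_pos_nonneg)
  have "\<exists>X' S'. X' - \<sigma> *\<^sub>R S' \<in> admm_fixed Ai b C \<sigma> \<and> norm ((X, S) - (X', S')) \<le> \<kappa> * norm (?f (X, S) - ?c)"
    if near: "norm ((X, S) - (Xs, Ss)) < \<epsilon> / (1 + \<kappa> * B)" for X S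
  proof -
    obtain X' S' where sol: "?f (X', S') = ?c" and close: "norm ((X, S) - (X', S')) \<le> \<kappa> * norm (?f (X, S) - ?c)"
      using \<kappa>(2)[of "(X, S)"] by auto
    have "norm ((X', S') - (X, S)) = norm ((X, S) - (X', S'))" by (rule norm_minus_commute)
    also have "\<dots> \<le> \<kappa> * (B * norm ((X, S) - (Xs, Ss)))"
      using close mult_left_mono[OF f_bound less_imp_le[OF \<kappa>(1)]] by (rule order_trans)
    finally have step: "norm ((X', S') - (X, S)) \<le> \<kappa> * (B * norm ((X, S) - (Xs, Ss)))" .
    have "norm ((X', S') - (Xs, Ss)) \<le> norm ((X', S') - (X, S)) + norm ((X, S) - (Xs, Ss))"
      by (rule norm_diff_triangle_le[OF order_refl order_refl])
    also have "\<dots> \<le> (1 + \<kappa> * B) * norm ((X, S) - (Xs, Ss))"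
      using step by (simp add: algebra_simps)
    also have "\<dots> < \<epsilon>" using near \<kappa>B by (simp add: pos_less_divide_eq mult.commute)
    finally show ?thesis using \<epsilon>(2)[OF sol] close by auto
  qed
  then show ?thesis using that[of "\<epsilon> / (1 + \<kappa> * B)" \<kappa>] \<epsilon>(1) \<kappa>(1) \<kappa>B by simp
qed

lemma admm_local_error_bound:
  assumes surjA: "surj (Aop Ai)" and KKT: "KKT Ai b C Xs ys Ss" and "0 < \<sigma>"
  obtains \<epsilon> \<alpha> where "0 < \<epsilon>" "0 < \<alpha>"
    "\<And>Z. symmetric_mat Z \<Longrightarrow> norm ((proj_psd Z, (1 / \<sigma>) *\<^sub>R proj_psd (- Z)) - (Xs, Ss)) < \<epsilon> \<Longrightarrow>
       infdist Z (admm_fixed Ai b C \<sigma>)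
         \<le> \<alpha> * (norm (admm_map Ai b C \<sigma> Z - Z)
                 + norm (closest_point (T_S Xs) (proj_psd Z))
                 + \<sigma> * norm (closest_point (T_X Ss) ((1 / \<sigma>) *\<^sub>R proj_psd (- Z))))"
proof -
  obtain \<epsilon> \<kappa> where \<epsilon>: "0 < \<epsilon>" and \<kappa>: "0 < \<kappa>" and fixed_near: "\<And>X S. norm ((X, S) - (Xs, Ss)) < \<epsilon> \<Longrightarrow>
      \<exists>X' S'. X' - \<sigma> *\<^sub>R S' \<in> admm_fixed Ai b C \<sigma>
        \<and> norm ((X, S) - (X', S')) \<le> \<kappa> * norm (kkt_lin Ai Xs Ss (X, S) - kkt_rhs Ai b C)"
    using admm_fixed_within_kkt_residual[OF surjA KKT \<open>0 < \<sigma>\<close>] by blast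
  define L where "L = onorm (Aop Ai) + 1 + 1 / \<sigma>"
  have "0 < 1 / \<sigma>" using \<open>0 < \<sigma>\<close> by simp
  then have L: "0 < L"
    using onorm_pos_le[OF linear_Aop[of Ai, unfolded linear_conv_bounded_linear]] unfolding L_def by linarith
  show ?thesis
  proof (rule that[OF \<epsilon>, of "(1 + \<sigma>) * \<kappa> * L"])
    show "0 < (1 + \<sigma>) * \<kappa> * L" using \<kappa> L \<open>0 < \<sigma>\<close> by simp
    fix Z
    assume symZ: "symmetric_mat Z" and near: "norm ((proj_psd Z, (1 / \<sigma>) *\<^sub>R proj_psd (- Z)) - (Xs, Ss)) < \<epsilon>"
    define X S where "X = proj_psd Z" and "S = (1 / \<sigma>) *\<^sub>R proj_psd (- Z)"
    obtain X' S' where fixed: "X' - \<sigma> *\<^sub>R S' \<in> admm_fixed Ai b C \<sigma>"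
      and close: "norm ((X, S) - (X', S')) \<le> \<kappa> * norm (kkt_lin Ai Xs Ss (X, S) - kkt_rhs Ai b C)"
      using fixed_near[OF near[folded X_def S_def]] by blast
    have "Z = X - \<sigma> *\<^sub>R S" using proj_psd_moreau[OF symZ] \<open>0 < \<sigma>\<close> by (simp add: X_def S_def)
    then have "dist Z (X' - \<sigma> *\<^sub>R S') = norm ((X - X') - \<sigma> *\<^sub>R (S - S'))"
      by (simp only:) (simp add: dist_norm algebra_simps)
    then have "infdist Z (admm_fixed Ai b C \<sigma>) \<le> norm ((X - X') - \<sigma> *\<^sub>R (S - S'))"
      using infdist_le[OF fixed, of Z] by simp
    also have "\<dots> \<le> (1 + \<sigma>) * norm ((X, S) - (X', S'))"
      using norm_diff_scaleR_le_norm_Pair[of \<sigma> "X - X'" "S - S'"] \<open>0 < \<sigma>\<close> by simp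
    also have "\<dots> \<le> (1 + \<sigma>) * (\<kappa> * norm (kkt_lin Ai Xs Ss (X, S) - kkt_rhs Ai b C))"
      using close \<open>0 < \<sigma>\<close> by (intro mult_left_mono) simp_all
    also have "\<dots> \<le> (1 + \<sigma>) * (\<kappa> * (L * (norm (admm_map Ai b C \<sigma> Z - Z)
        + norm (closest_point (T_S Xs) X) + \<sigma> * norm (closest_point (T_X Ss) S))))"
      using kkt_lin_residual_le[OF surjA \<open>0 < \<sigma>\<close> symZ, of Xs Ss b C] \<kappa> \<open>0 < \<sigma>\<close>
      unfolding L_def X_def S_def by (intro mult_left_mono) simp_all
    finally show "infdist Z (admm_fixed Ai b C \<sigma>) \<le> (1 + \<sigma>) * \<kappa> * L * (norm (admm_map Ai b C \<sigma> Z - Z)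
        + norm (closest_point (T_S Xs) (proj_psd Z))
        + \<sigma> * norm (closest_point (T_X Ss) ((1 / \<sigma>) *\<^sub>R proj_psd (- Z))))"
      by (simp add: X_def S_def mult.assoc)
  qed
qed

theorem lemma8:
  fixes Ai :: "'m::finite \<Rightarrow> real^'n^'n" and b :: "real^'m" and C :: "real^'n^'n"
    and \<sigma> :: real and Z :: "nat \<Rightarrow> real^'n^'n"
    and Xs Ss :: "real^'n^'n" and ys :: "real^'m"
  assumes Ai_sym: "\<And>i. symmetric_mat (Ai i)"
    and C_sym: "symmetric_mat C"
    and surjA: "\<forall>v. \<exists>X. symmetric_mat X \<and> Aop Ai X = v"
    and KKT_nonempty: "\<exists>X y S. KKT Ai b C X y S"
    and sigma_pos: "\<sigma> > 0"
    and Z0_sym: "symmetric_mat (Z 0)"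
    and iter: "\<And>k. Z (Suc k) = admm_map Ai b C \<sigma> (Z k)"
    and convX: "(\<lambda>k. proj_psd (Z k)) \<longlonglongrightarrow> Xs"
    and convS: "(\<lambda>k. (1 / \<sigma>) *\<^sub>R proj_psd (- Z k)) \<longlonglongrightarrow> Ss"
    and KKTstar: "KKT Ai b C Xs ys Ss"
    and strict_compl: "rank Xs + rank Ss = CARD('n)"
  shows "\<exists>kbar::nat. \<exists>\<alpha>>0. \<forall>k\<ge>kbar.
           infdist (Z k) (admm_fixed Ai b C \<sigma>)
             \<le> \<alpha> * (norm (Z (Suc k) - Z k)
                     + norm (closest_point (T_S Xs) (proj_psd (Z k)))
                     + \<sigma> * norm (closest_point (T_X Ss) ((1 / \<sigma>) *\<^sub>R proj_psd (- Z k))))"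
proof -
  have "surj (Aop Ai)" using surjA by (metis surjI)
  then obtain \<epsilon> \<alpha> where \<epsilon>: "0 < \<epsilon>" and \<alpha>: "0 < \<alpha>" and bound: "\<And>Z. symmetric_mat Z \<Longrightarrow>
      norm ((proj_psd Z, (1 / \<sigma>) *\<^sub>R proj_psd (- Z)) - (Xs, Ss)) < \<epsilon> \<Longrightarrow>
      infdist Z (admm_fixed Ai b C \<sigma>) \<le> \<alpha> * (norm (admm_map Ai b C \<sigma> Z - Z)
        + norm (closest_point (T_S Xs) (proj_psd Z))
        + \<sigma> * norm (closest_point (T_X Ss) ((1 / \<sigma>) *\<^sub>R proj_psd (- Z))))"
    using admm_local_error_bound[OF _ KKTstar sigma_pos] by blast
  have sym: "symmetric_mat (Z k)" for k
    by (induction k) (simp_all add: Z0_sym iter symmetric_mat_admm_map[OF Ai_sym C_sym])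
  have "eventually (\<lambda>k. dist (proj_psd (Z k), (1 / \<sigma>) *\<^sub>R proj_psd (- Z k)) (Xs, Ss) < \<epsilon>) sequentially"
    using tendstoD[OF tendsto_Pair[OF convX convS] \<epsilon>] .
  then obtain kbar where "\<And>k. k \<ge> kbar \<Longrightarrow> dist (proj_psd (Z k), (1 / \<sigma>) *\<^sub>R proj_psd (- Z k)) (Xs, Ss) < \<epsilon>"
    unfolding eventually_sequentially by blast
  then show ?thesis
    using bound[OF sym] \<alpha> unfolding dist_norm iter[symmetric] by blast
qed

end
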